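(* Let $\Lambda\in\mathbb{H}^{\mathbb{Z}}$ satisfy $\sum_n(1+|\Lambda_n|^2)^{-1}<\infty$, and assume $\Lambda$ is generic, i.e. $\Lambda_ni\bar\Lambda_n\neq\Lambda_mi\bar\Lambda_m$ for all $n\neq m$. Then $G_\Lambda$ acts freely on $N_\Lambda=\{x\in M_\Lambda: x_ni\bar x_n-\Lambda_ni\bar\Lambda_n\text{ is independent of }n\}$.
   Context: $\mathbb{H}$ denotes the quaternions, and $S^1\subset\mathbb{C}\subset\mathbb{H}$. $M$ is the space of square-summable sequences in $\mathbb{H}^{\mathbb{Z}}$, and $M_\Lambda=\Lambda+M$. $G_\Lambda=\{g\in(S^1)^{\mathbb{Z}}:\sum_n(1+|\Lambda_n|^2)|1-g_n|^2<\infty,\ \prod_ng_n=1\}$; the product converges under this summability condition. $G_\Lambda$ acts on $M_\Lambda$ by $(xg)_n=x_ng_n$. The set $N_\Lambda$ is the zero set of the hyperkähler moment map $\hat\mu_\Lambda$, given by $\langle\hat\mu_\Lambda(x),\xi\rangle=\sum_n(x_ni\bar x_n-\Lambda_ni\bar\Lambda_n)\xi_n$ for $\xi$ in the Lie algebra $\{\xi\in\mathbb{R}^{\mathbb{Z}}:\sum(1+|\Lambda_n|^2)\xi_n^2<\infty,\ \sum\xi_n=0\}$. *)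

theory Defs
  imports "HOL-Analysis.Analysis"
begin

datatype quat = Quat (qre: real) (qi: real) (qj: real) (qk: real)

definition qmul :: "quat \<Rightarrow> quat \<Rightarrow> quat" where
  "qmul x y = Quat
     (qre x * qre y - qi x * qi y - qj x * qj y - qk x * qk y)
     (qre x * qi y + qi x * qre y + qj x * qk y - qk x * qj y)
     (qre x * qj y - qi x * qk y + qj x * qre y + qk x * qi y)
     (qre x * qk y + qi x * qj y - qj x * qi y + qk x * qre y)"

definition qcnj :: "quat \<Rightarrow> quat" where
  "qcnj x = Quat (qre x) (- qi x) (- qj x) (- qk x)"

definition qsub :: "quat \<Rightarrow> quat \<Rightarrow> quat" where
  "qsub x y = Quat (qre x - qre y) (qi x - qi y) (qj x - qj y) (qk x - qk y)"

definition qnorm2 :: "quat \<Rightarrow> real" where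
  "qnorm2 x = (qre x)^2 + (qi x)^2 + (qj x)^2 + (qk x)^2"

definition qI :: quat where "qI = Quat 0 1 0 0"

definition quat_of_complex :: "complex \<Rightarrow> quat" where
  "quat_of_complex z = Quat (Re z) (Im z) 0 0"

definition qmom :: "quat \<Rightarrow> quat" where
  "qmom x = qmul (qmul x qI) (qcnj x)"

definition M_Lambda :: "(int \<Rightarrow> quat) \<Rightarrow> (int \<Rightarrow> quat) set" where
  "M_Lambda \<Lambda> = {x. (\<lambda>n. qnorm2 (qsub (x n) (\<Lambda> n))) summable_on UNIV}"

text \<open>The (absolutely convergent) product over Z, taken as the limit of symmetric
  partial products, equals 1.\<close>
definition G_Lambda :: "(int \<Rightarrow> quat) \<Rightarrow> (int \<Rightarrow> complex) set" where
  "G_Lambda \<Lambda> = {g. (\<forall>n. cmod (g n) = 1)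
     \<and> (\<lambda>n. (1 + qnorm2 (\<Lambda> n)) * (cmod (1 - g n))^2) summable_on UNIV
     \<and> (\<lambda>N::nat. \<Prod>n\<in>{- int N..int N}. g n) \<longlonglongrightarrow> 1}"

definition act :: "(int \<Rightarrow> quat) \<Rightarrow> (int \<Rightarrow> complex) \<Rightarrow> (int \<Rightarrow> quat)" where
  "act x g = (\<lambda>n. qmul (x n) (quat_of_complex (g n)))"

definition N_Lambda :: "(int \<Rightarrow> quat) \<Rightarrow> (int \<Rightarrow> quat) set" where
  "N_Lambda \<Lambda> = {x \<in> M_Lambda \<Lambda>.
     \<forall>n m. qsub (qmom (x n)) (qmom (\<Lambda> n)) = qsub (qmom (x m)) (qmom (\<Lambda> m))}"

end

theory Submission
  imports Defs
begin

(* Suppose g \<in> G_Lambda fixes x \<in> N_Lambda, i.e. x_n g_n = x_n for every n.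
   Since the quaternion norm is multiplicative, |x_n|^2 |g_n - 1|^2 = |x_n g_n - x_n|^2 = 0,
   so x_n = 0 (hence x_n i conj(x_n) = 0) at every index n where g_n \<noteq> 1.  On N_Lambda
   the quantity x_n i conj(x_n) - Lambda_n i conj(Lambda_n) is independent of n, so two
   distinct such indices n, m would give Lambda_n i conj(Lambda_n) = Lambda_m i conj(Lambda_m),
   contradicting genericity.  Hence g_n = 1 except at most at one index n0; the symmetric
   partial products of g are then eventually equal to g_n0, and since they tend to 1 we
   get g_n0 = 1. *)

text \<open>Euler's four-square identity: the squared quaternion norm is multiplicative.\<close>
lemma qnorm2_qmul: "qnorm2 (qmul x y) = qnorm2 x * qnorm2 y"
  by (simp add: qmul_def qnorm2_def power2_eq_square algebra_simps)

lemma qnorm2_eq_0_iff: "qnorm2 x = 0 \<longleftrightarrow> x = Quat 0 0 0 0"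
  by (cases x) (auto simp: qnorm2_def add_nonneg_eq_0_iff)

lemma qnorm2_quat_of_complex: "qnorm2 (quat_of_complex z) = (cmod z)^2"
  by (simp add: qnorm2_def quat_of_complex_def cmod_power2)

lemma qsub_qmul_quat_of_complex:
  "qsub (qmul x (quat_of_complex z)) x = qmul x (quat_of_complex (z - 1))"
  by (simp add: qsub_def qmul_def quat_of_complex_def algebra_simps)

text \<open>A quaternion fixed by right multiplication with a complex number z \<noteq> 1 is zero:
  its norm times |z - 1| is the norm of x z - x = 0.\<close>
lemma qmul_complex_fixed_imp_zero:
  assumes fixed: "qmul x (quat_of_complex z) = x" and "z \<noteq> 1"
  shows "x = Quat 0 0 0 0"
proof -
  have "qnorm2 x * (cmod (z - 1))^2 = qnorm2 (qsub (qmul x (quat_of_complex z)) x)"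
    by (simp add: qsub_qmul_quat_of_complex qnorm2_qmul qnorm2_quat_of_complex)
  also have "\<dots> = 0"
    by (simp add: fixed qsub_def qnorm2_def)
  finally show ?thesis
    using \<open>z \<noteq> 1\<close> by (simp add: qnorm2_eq_0_iff)
qed

lemma qmom_zero: "qmom (Quat 0 0 0 0) = Quat 0 0 0 0"
  by (simp add: qmom_def qmul_def qcnj_def qI_def)

text \<open>If the symmetric partial products of g tend to 1 and g is trivial away from a single
  index n0, then g is trivial at n0 as well: the partial products are eventually g n0.\<close>
lemma symmetric_prod_single_factor:
  fixes g :: "int \<Rightarrow> 'a :: {comm_monoid_mult, t2_space}"
  assumes trivial: "\<And>n. n \<noteq> n0 \<Longrightarrow> g n = 1"
    and lim: "(\<lambda>N::nat. \<Prod>n\<in>{- int N..int N}. g n) \<longlonglongrightarrow> 1"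
  shows "g n0 = 1"
proof -
  have "eventually (\<lambda>N::nat. (\<Prod>n\<in>{- int N..int N}. g n) = g n0) sequentially"
  proof (rule eventually_sequentiallyI)
    fix N :: nat assume "nat \<bar>n0\<bar> \<le> N"
    hence "n0 \<in> {- int N..int N}" by auto
    hence "(\<Prod>n\<in>{- int N..int N}. g n) = g n0 * (\<Prod>n\<in>{- int N..int N} - {n0}. g n)"
      by (simp add: prod.remove)
    also have "(\<Prod>n\<in>{- int N..int N} - {n0}. g n) = 1"
      by (rule prod.neutral) (auto intro: trivial)
    finally show "(\<Prod>n\<in>{- int N..int N}. g n) = g n0" by simp
  qed
  hence "(\<lambda>N::nat. \<Prod>n\<in>{- int N..int N}. g n) \<longlonglongrightarrow> g n0"
    by (rule tendsto_eventually)
  with lim show ?thesis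
    using LIMSEQ_unique by blast
qed

text \<open>For generic Lambda, an element of G_Lambda fixing a point of N_Lambda moves at most
  one index: at a moved index the moment x i conj(x) vanishes, and the constancy of
  x_n i conj(x_n) - Lambda_n i conj(Lambda_n) then identifies the moments of Lambda.\<close>
lemma fixing_element_moves_at_most_one_index:
  assumes generic: "\<forall>n m. n \<noteq> m \<longrightarrow> qmom (\<Lambda> n) \<noteq> qmom (\<Lambda> m)"
    and xN: "x \<in> N_Lambda \<Lambda>" and fixed: "act x g = x"
    and moved: "g n \<noteq> 1" "g m \<noteq> 1"
  shows "n = m"
proof (rule ccontr)
  assume "n \<noteq> m"
  have "qmul (x k) (quat_of_complex (g k)) = x k" for k
    using fun_cong[OF fixed, of k] by (simp add: act_def)
  hence "x n = Quat 0 0 0 0" "x m = Quat 0 0 0 0"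
    using moved qmul_complex_fixed_imp_zero by blast+
  moreover have "qsub (qmom (x n)) (qmom (\<Lambda> n)) = qsub (qmom (x m)) (qmom (\<Lambda> m))"
    using xN by (simp add: N_Lambda_def)
  ultimately have "qmom (\<Lambda> n) = qmom (\<Lambda> m)"
    by (simp add: qmom_zero qsub_def quat.expand)
  with generic \<open>n \<noteq> m\<close> show False by blast
qed

theorem proposition2p4:
  fixes \<Lambda> :: "int \<Rightarrow> quat"
  assumes "(\<lambda>n. 1 / (1 + qnorm2 (\<Lambda> n))) summable_on UNIV"
    and "\<forall>n m. n \<noteq> m \<longrightarrow> qmom (\<Lambda> n) \<noteq> qmom (\<Lambda> m)"
  shows "\<forall>x \<in> N_Lambda \<Lambda>. \<forall>g \<in> G_Lambda \<Lambda>. act x g = x \<longrightarrow> g = (\<lambda>n. 1)"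
proof (intro ballI impI)
  fix x g assume xN: "x \<in> N_Lambda \<Lambda>" and gG: "g \<in> G_Lambda \<Lambda>" and fixed: "act x g = x"
  have lim: "(\<lambda>N::nat. \<Prod>n\<in>{- int N..int N}. g n) \<longlonglongrightarrow> 1"
    using gG by (simp add: G_Lambda_def)
  show "g = (\<lambda>n. 1)"
  proof (rule ccontr)
    assume "g \<noteq> (\<lambda>n. 1)"
    then obtain n0 where moved: "g n0 \<noteq> 1" by auto
    have "g n = 1" if "n \<noteq> n0" for n
      using fixing_element_moves_at_most_one_index[OF assms(2) xN fixed _ moved] that by blast
    hence "g n0 = 1"
      using lim by (rule symmetric_prod_single_factor)
    with moved show False by contradiction
  qed
qed

end
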